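(* Let $q-p=3$, $-1<p<2$ and $q>\frac{2p}{2-p}$, and let $r>1$. If $\frac{p(r^q-1)}{q(r^p-1)}\le r^2$, then $I(p,q,r,x)<r^2+1-\frac{r^2}{x^2}-x^2$ for all $x\in(1,r)$. If $\frac{p(r^q-1)}{q(r^p-1)}>r^2$, then $I(p,q,r,x)<r^2-2r+2x-x^2$ for all $x\in(1,r)$.
   Context: For $x\in(1,r)$: $I(p,q,r,x)=\big(1+\frac{r^q-1}{r^p-1}(x^p-1)\big)^{2/q}-x^2$ if $p\ne0$, and $I(0,q,r,x)=\big(1+\frac{r^q-1}{\log r}\log x\big)^{2/q}-x^2$. For $p=0$ the quantity $\frac{p(r^q-1)}{q(r^p-1)}$ is understood as its limit $\frac{r^q-1}{q\log r}$. *)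

theory Defs
  imports "HOL-Analysis.Analysis"
begin

definition I_fun :: "real \<Rightarrow> real \<Rightarrow> real \<Rightarrow> real \<Rightarrow> real" where
  "I_fun p q r x =
     (if p \<noteq> 0
      then (1 + (r powr q - 1) / (r powr p - 1) * (x powr p - 1)) powr (2 / q) - x\<^sup>2
      else (1 + (r powr q - 1) / ln r * ln x) powr (2 / q) - x\<^sup>2)"

text \<open>The quantity p(r^q-1)/(q(r^p-1)), with its limit value (r^q-1)/(q ln r) at p = 0.\<close>
definition K_ratio :: "real \<Rightarrow> real \<Rightarrow> real \<Rightarrow> real" where
  "K_ratio p q r =
     (if p \<noteq> 0 then p * (r powr q - 1) / (q * (r powr p - 1))
      else (r powr q - 1) / (q * ln r))"

end

theory Submission
  imports Defs
begin

text \<open>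
  Write \<open>b = box_cox p\<close> and \<open>C = (r\<^sup>q - 1) / b r\<close>, so that \<open>K_ratio p q r = C / q\<close>
  and the claim reads \<open>(1 + C b x)\<^bsup>2/q\<^esup> < h x\<close>, where \<open>h\<close> is the profile
  \<open>r\<^sup>2 + 1 - r\<^sup>2/x\<^sup>2\<close> (if \<open>C \<le> q r\<^sup>2\<close>) or \<open>r\<^sup>2 - 2r + 2x\<close> (if \<open>C > q r\<^sup>2\<close>).
  Both profiles have \<open>h 1 \<ge> 1\<close> and \<open>h r = r\<^sup>2\<close>, so \<open>D = h\<^bsup>q/2\<^esup> - 1 - C b\<close> is
  nonnegative at 1 and vanishes at \<open>r\<close>. As \<open>D' = x\<^bsup>p-1\<^esup> (W - C)\<close> with
  \<open>W = (h\<^bsup>q/2\<^esup>)' / b'\<close>, \<open>D\<close> is positive on \<open>(1, r)\<close> once \<open>W - C\<close> changes sign at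
  most once, from \<open>+\<close> to \<open>-\<close>. The logarithmic derivative of \<open>W\<close> is a positive multiple
  of a monotone function, so \<open>ln W\<close> is strictly quasiconcave for the first profile, where
  \<open>W 1 = q r\<^sup>2 \<ge> C\<close>, and strictly quasiconvex for the second, where \<open>W r = q r\<^sup>2 < C\<close>;
  either way the sign pattern follows.
\<close>

\<comment> \<open>\<open>f - t\<close> is positive and then negative on \<open>(lo, hi)\<close>, changing sign at most once.\<close>
definition crosses_down :: "(real \<Rightarrow> real) \<Rightarrow> real \<Rightarrow> real \<Rightarrow> real \<Rightarrow> bool" where
  "crosses_down f t lo hi \<longleftrightarrow>
     (\<forall>x. lo < x \<and> x < hi \<longrightarrow>
        (\<forall>y. lo < y \<and> y < x \<longrightarrow> t < f y) \<or> (\<forall>y. x < y \<and> y < hi \<longrightarrow> f y < t))"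

lemma crosses_down_transfer:
  assumes "crosses_down g s lo hi"
    and "\<And>y. lo < y \<Longrightarrow> y < hi \<Longrightarrow> (t < f y \<longleftrightarrow> s < g y) \<and> (f y < t \<longleftrightarrow> g y < s)"
  shows "crosses_down f t lo hi"
  using assms unfolding crosses_down_def by (meson less_trans)

lemma pos_if_deriv_crosses_down:
  fixes D D' :: "real \<Rightarrow> real"
  assumes cont: "continuous_on {lo..hi} D"
    and der: "\<And>y. lo < y \<Longrightarrow> y < hi \<Longrightarrow> (D has_real_derivative D' y) (at y)"
    and sign: "crosses_down D' 0 lo hi"
    and "0 \<le> D lo" "D hi = 0" "lo < x" "x < hi"
  shows "0 < D x"
proof -
  have "(\<forall>y. lo < y \<and> y < x \<longrightarrow> 0 < D' y) \<or> (\<forall>y. x < y \<and> y < hi \<longrightarrow> D' y < 0)"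
    using sign \<open>lo < x\<close> \<open>x < hi\<close> unfolding crosses_down_def by blast
  then show ?thesis
  proof
    assume rising: "\<forall>y. lo < y \<and> y < x \<longrightarrow> 0 < D' y"
    have "D lo < D x"
    proof (rule DERIV_pos_imp_increasing_open[OF \<open>lo < x\<close>])
      show "\<exists>d. (D has_real_derivative d) (at y) \<and> 0 < d" if "lo < y" "y < x" for y
        using der[of y] rising that \<open>x < hi\<close> by auto
      show "continuous_on {lo..x} D"
        using cont by (rule continuous_on_subset) (use \<open>x < hi\<close> in auto)
    qed
    with \<open>0 \<le> D lo\<close> show ?thesis by simp
  next
    assume falling: "\<forall>y. x < y \<and> y < hi \<longrightarrow> D' y < 0"
    have "D hi < D x"
    proof (rule DERIV_neg_imp_decreasing_open[OF \<open>x < hi\<close>])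
      show "\<exists>d. (D has_real_derivative d) (at y) \<and> d < 0" if "x < y" "y < hi" for y
        using der[of y] falling that \<open>lo < x\<close> by auto
      show "continuous_on {x..hi} D"
        using cont by (rule continuous_on_subset) (use \<open>lo < x\<close> in auto)
    qed
    with \<open>D hi = 0\<close> show ?thesis by simp
  qed
qed

lemma strict_quasiconcave_if_deriv_factor_decreasing:
  fixes L L' g P :: "real \<Rightarrow> real"
  assumes cont: "continuous_on {lo..hi} L"
    and der: "\<And>y. lo < y \<Longrightarrow> y < hi \<Longrightarrow> (L has_real_derivative L' y) (at y)"
    and factor: "\<And>y. lo < y \<Longrightarrow> y < hi \<Longrightarrow> L' y = g y * P y"
    and P_pos: "\<And>y. lo < y \<Longrightarrow> y < hi \<Longrightarrow> 0 < P y"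
    and g_decr: "\<And>y z. lo < y \<Longrightarrow> y < z \<Longrightarrow> z < hi \<Longrightarrow> g z < g y"
    and abc: "lo \<le> a" "a < b" "b < c" "c \<le> hi"
  shows "min (L a) (L c) < L b"
proof (cases "0 \<le> g b")
  case True
  have "L a < L b"
  proof (rule DERIV_pos_imp_increasing_open[OF \<open>a < b\<close>])
    fix y assume y: "a < y" "y < b"
    then have "0 < L' y"
      using factor[of y] P_pos[of y] g_decr[of y b] True abc by (simp add: add_pos_nonneg)
    then show "\<exists>d. (L has_real_derivative d) (at y) \<and> 0 < d" using der[of y] y abc by auto
  next
    show "continuous_on {a..b} L" using cont by (rule continuous_on_subset) (use abc in auto)
  qed
  then show ?thesis by simp
next
  case False
  have "L c < L b"
  proof (rule DERIV_neg_imp_decreasing_open[OF \<open>b < c\<close>])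
    fix y assume y: "b < y" "y < c"
    then have "L' y < 0"
      using factor[of y] P_pos[of y] g_decr[of b y] False abc by (simp add: mult_neg_pos)
    then show "\<exists>d. (L has_real_derivative d) (at y) \<and> d < 0" using der[of y] y abc by auto
  next
    show "continuous_on {b..c} L" using cont by (rule continuous_on_subset) (use abc in auto)
  qed
  then show ?thesis by simp
qed

lemma crosses_down_if_deriv_factor_decreasing:
  fixes L L' g P :: "real \<Rightarrow> real"
  assumes "continuous_on {lo..hi} L"
    and "\<And>y. lo < y \<Longrightarrow> y < hi \<Longrightarrow> (L has_real_derivative L' y) (at y)"
    and "\<And>y. lo < y \<Longrightarrow> y < hi \<Longrightarrow> L' y = g y * P y"
    and "\<And>y. lo < y \<Longrightarrow> y < hi \<Longrightarrow> 0 < P y"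
    and "\<And>y z. lo < y \<Longrightarrow> y < z \<Longrightarrow> z < hi \<Longrightarrow> g z < g y"
    and start: "t \<le> L lo"
  shows "crosses_down L t lo hi"
  unfolding crosses_down_def
proof (intro allI impI)
  note quasi = strict_quasiconcave_if_deriv_factor_decreasing[OF assms(1-5)]
  fix x assume x: "lo < x \<and> x < hi"
  show "(\<forall>y. lo < y \<and> y < x \<longrightarrow> t < L y) \<or> (\<forall>y. x < y \<and> y < hi \<longrightarrow> L y < t)"
  proof (cases "t \<le> L x")
    case True
    have "t < L y" if "lo < y" "y < x" for y
      using quasi[of lo y x] that x True start by simp
    then show ?thesis by blast
  next
    case False
    have "L y < t" if "x < y" "y < hi" for y
      using quasi[of lo x y] that x False start by simp
    then show ?thesis by blast
  qed
qed

lemma crosses_down_if_deriv_factor_increasing: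
  fixes L L' g P :: "real \<Rightarrow> real"
  assumes cont: "continuous_on {lo..hi} L"
    and der: "\<And>y. lo < y \<Longrightarrow> y < hi \<Longrightarrow> (L has_real_derivative L' y) (at y)"
    and factor: "\<And>y. lo < y \<Longrightarrow> y < hi \<Longrightarrow> L' y = g y * P y"
    and P_pos: "\<And>y. lo < y \<Longrightarrow> y < hi \<Longrightarrow> 0 < P y"
    and g_incr: "\<And>y z. lo < y \<Longrightarrow> y < z \<Longrightarrow> z < hi \<Longrightarrow> g y < g z"
    and finish: "L hi < t"
  shows "crosses_down L t lo hi"
  unfolding crosses_down_def
proof (intro allI impI)
  have quasi: "min (- L a) (- L c) < - L b" if "lo \<le> a" "a < b" "b < c" "c \<le> hi" for a b c
  proof (rule strict_quasiconcave_if_deriv_factor_decreasing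
      [where L = "\<lambda>y. - L y" and L' = "\<lambda>y. - L' y" and g = "\<lambda>y. - g y"])
    show "continuous_on {lo..hi} (\<lambda>y. - L y)" using cont by (rule continuous_on_minus)
    show "((\<lambda>y. - L y) has_real_derivative - L' y) (at y)" if "lo < y" "y < hi" for y
      using der[OF that] by (rule DERIV_minus)
    show "- L' y = - g y * P y" if "lo < y" "y < hi" for y using factor[OF that] by simp
  qed (use P_pos g_incr that in auto)
  fix x assume x: "lo < x \<and> x < hi"
  show "(\<forall>y. lo < y \<and> y < x \<longrightarrow> t < L y) \<or> (\<forall>y. x < y \<and> y < hi \<longrightarrow> L y < t)"
  proof (cases "L x < t")
    case True
    have "L y < t" if "x < y" "y < hi" for y
      using quasi[of x y hi] that x True finish by simp
    then show ?thesis by blast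
  next
    case False
    have "t < L y" if "lo < y" "y < x" for y
      using quasi[of y x hi] that x False finish by simp
    then show ?thesis by blast
  qed
qed

definition box_cox :: "real \<Rightarrow> real \<Rightarrow> real" where
  "box_cox p y = (if p = 0 then ln y else (y powr p - 1) / p)"

lemma box_cox_one [simp]: "box_cox p 1 = 0"
  by (simp add: box_cox_def)

lemma has_real_derivative_box_cox:
  assumes "0 < y"
  shows "(box_cox p has_real_derivative y powr (p - 1)) (at y)"
proof (cases "p = 0")
  case True
  have "(ln has_real_derivative inverse y) (at y)" using assms by (rule DERIV_ln)
  then show ?thesis using True assms by (simp add: box_cox_def[abs_def] powr_minus)
next
  case False
  have "((\<lambda>y. (y powr p - 1) / p) has_real_derivative y powr (p - 1)) (at y)"
    using assms False by (auto intro!: derivative_eq_intros)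
  then show ?thesis using False by (simp add: box_cox_def[abs_def])
qed

lemma box_cox_pos:
  assumes "1 < y"
  shows "0 < box_cox p y"
proof -
  have "box_cox p 1 < box_cox p y"
  proof (rule DERIV_pos_imp_increasing[OF assms])
    fix t :: real assume "1 \<le> t"
    then show "\<exists>d. (box_cox p has_real_derivative d) (at t) \<and> 0 < d"
      using has_real_derivative_box_cox[of t p] by auto
  qed
  then show ?thesis by simp
qed

lemma I_fun_eq_box_cox:
  "I_fun p q r x = (1 + (r powr q - 1) / box_cox p r * box_cox p x) powr (2 / q) - x\<^sup>2"
proof -
  have "a / (b / p) * (c / p) = a / b * c" if "p \<noteq> 0" for a b c :: real
    using that by (cases "b = 0") (simp_all add: field_simps)
  then show ?thesis by (simp add: I_fun_def box_cox_def)
qed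

lemma K_ratio_eq_box_cox: "K_ratio p q r = (r powr q - 1) / (q * box_cox p r)"
  by (simp add: K_ratio_def box_cox_def)

lemma box_cox_ratio_pos:
  assumes "0 < q" "1 < r"
  shows "0 < (r powr q - 1) / box_cox p r"
  using assms box_cox_pos[of r p] by simp

\<comment> \<open>For \<open>h'\<close> the derivative of \<open>h\<close>: the derivative of \<open>h\<^bsup>q/2\<^esup>\<close> divided by that of \<open>box_cox p\<close>.\<close>
definition slope_ratio :: "real \<Rightarrow> real \<Rightarrow> (real \<Rightarrow> real) \<Rightarrow> (real \<Rightarrow> real) \<Rightarrow> real \<Rightarrow> real" where
  "slope_ratio p q h h' y = q / 2 * h y powr (q / 2 - 1) * h' y * y powr (1 - p)"

lemma powr_box_cox_less_if_slope_ratio_crosses_down: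
  fixes h h' :: "real \<Rightarrow> real" and p q r x :: real
  defines "C \<equiv> (r powr q - 1) / box_cox p r"
  assumes "1 < r" "0 < q"
    and h_deriv: "\<And>y. 1 \<le> y \<Longrightarrow> y \<le> r \<Longrightarrow> (h has_real_derivative h' y) (at y)"
    and h_pos: "\<And>y. 1 \<le> y \<Longrightarrow> y \<le> r \<Longrightarrow> 0 < h y"
    and "1 \<le> h 1" "h r = r\<^sup>2"
    and crossing: "crosses_down (slope_ratio p q h h') C 1 r"
    and "1 < x" "x < r"
  shows "(1 + C * box_cox p x) powr (2 / q) < h x"
proof -
  define D where "D y = h y powr (q / 2) - (1 + C * box_cox p y)" for y
  define D' where "D' y = q / 2 * h y powr (q / 2 - 1) * h' y - C * y powr (p - 1)" for y
  have D_deriv: "(D has_real_derivative D' y) (at y)" if "1 \<le> y" "y \<le> r" for y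
    unfolding D_def D'_def using that h_pos[OF that]
    by (auto intro!: derivative_eq_intros h_deriv has_real_derivative_box_cox)
  have D'_eq: "D' y = y powr (p - 1) * (slope_ratio p q h h' y - C)" if "0 < y" for y
  proof -
    have "y powr (p - 1) * y powr (1 - p) = 1" using that by (simp flip: powr_add)
    then show ?thesis unfolding D'_def slope_ratio_def by (simp add: algebra_simps)
  qed
  have "crosses_down D' 0 1 r"
    using crossing by (rule crosses_down_transfer) (simp add: D'_eq zero_less_mult_iff mult_less_0_iff)
  moreover have "0 \<le> D 1"
    using \<open>1 \<le> h 1\<close> \<open>0 < q\<close> by (simp add: D_def ge_one_powr_ge_zero)
  moreover have "D r = 0"
  proof -
    have "r\<^sup>2 powr (q / 2) = r powr q" using \<open>1 < r\<close> by (simp add: powr_powr flip: powr_numeral)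
    moreover have "box_cox p r \<noteq> 0" using box_cox_pos[of r p] \<open>1 < r\<close> by simp
    ultimately show ?thesis using \<open>h r = r\<^sup>2\<close> by (simp add: D_def C_def)
  qed
  ultimately have "0 < D x"
    using \<open>1 < x\<close> \<open>x < r\<close>
    by (intro pos_if_deriv_crosses_down[where D' = D'] DERIV_atLeastAtMost_imp_continuous_on)
      (use D_deriv in auto)
  then have less: "1 + C * box_cox p x < h x powr (q / 2)" by (simp add: D_def)
  have "0 < C" using box_cox_ratio_pos[OF \<open>0 < q\<close> \<open>1 < r\<close>] by (simp add: C_def)
  then have "0 < 1 + C * box_cox p x" using box_cox_pos[of x p] \<open>1 < x\<close> by (simp add: add_pos_pos)
  then have "(1 + C * box_cox p x) powr (2 / q) < (h x powr (q / 2)) powr (2 / q)"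
    using less \<open>0 < q\<close> by (intro powr_less_mono2) auto
  also have "\<dots> = h x" using \<open>0 < q\<close> h_pos[of x] \<open>1 < x\<close> \<open>x < r\<close> by (simp add: powr_powr)
  finally show ?thesis .
qed

definition log_slope_ratio :: "real \<Rightarrow> real \<Rightarrow> (real \<Rightarrow> real) \<Rightarrow> (real \<Rightarrow> real) \<Rightarrow> real \<Rightarrow> real" where
  "log_slope_ratio p q h h' y = ln (q / 2) + (q / 2 - 1) * ln (h y) + ln (h' y) + (1 - p) * ln y"

lemma ln_slope_ratio:
  assumes "0 < q" "0 < h y" "0 < h' y" "0 < y"
  shows "ln (slope_ratio p q h h' y) = log_slope_ratio p q h h' y"
  using assms
  by (simp add: slope_ratio_def log_slope_ratio_def ln_mult zero_less_mult_iff del: times_divide_eq_left)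

lemma crosses_down_slope_ratio_if_log:
  assumes "crosses_down (log_slope_ratio p q h h') (ln C) lo hi"
    and "0 < q" "0 < C" "0 \<le> lo"
    and "\<And>y. lo < y \<Longrightarrow> y < hi \<Longrightarrow> 0 < h y \<and> 0 < h' y"
  shows "crosses_down (slope_ratio p q h h') C lo hi"
proof (rule crosses_down_transfer[OF assms(1)])
  fix y assume "lo < y" "y < hi"
  with assms(4,5) have "0 < h y" "0 < h' y" "0 < y" by auto
  with \<open>0 < q\<close> have "0 < slope_ratio p q h h' y" by (simp add: slope_ratio_def)
  moreover have "ln (slope_ratio p q h h' y) = log_slope_ratio p q h h' y"
    using \<open>0 < q\<close> \<open>0 < h y\<close> \<open>0 < h' y\<close> \<open>0 < y\<close> by (rule ln_slope_ratio)
  ultimately show "(C < slope_ratio p q h h' y \<longleftrightarrow> ln C < log_slope_ratio p q h h' y) \<and>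
      (slope_ratio p q h h' y < C \<longleftrightarrow> log_slope_ratio p q h h' y < ln C)"
    using \<open>0 < C\<close> by (metis ln_less_cancel_iff)
qed

lemma has_real_derivative_log_slope_ratio:
  assumes "(h has_real_derivative h' y) (at y)" "(h' has_real_derivative h'' y) (at y)"
    and "0 < h y" "0 < h' y" "0 < y"
  shows "(log_slope_ratio p q h h' has_real_derivative
           (q / 2 - 1) * h' y / h y + h'' y / h' y + (1 - p) / y) (at y)"
  unfolding log_slope_ratio_def[abs_def] using assms
  by (auto intro!: derivative_eq_intros simp: field_simps)

lemma inverse_square_profile_pos:
  fixes r y :: real
  assumes "1 \<le> y"
  shows "0 < r\<^sup>2 + 1 - r\<^sup>2 / y\<^sup>2"
proof -
  have "1 \<le> y\<^sup>2" using assms by (simp add: one_le_power)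
  then have "r\<^sup>2 / y\<^sup>2 \<le> r\<^sup>2" by (simp add: divide_le_eq mult_le_cancel_left1)
  then show ?thesis by simp
qed

lemma linear_profile_pos:
  fixes r y :: real
  assumes "1 \<le> y"
  shows "0 < r\<^sup>2 - 2 * r + 2 * y"
proof -
  have "0 < (r - 1)\<^sup>2 + 1" by (simp add: add_nonneg_pos)
  also have "\<dots> \<le> r\<^sup>2 - 2 * r + 2 * y" using assms by (simp add: power2_eq_square algebra_simps)
  finally show ?thesis .
qed

lemma crosses_down_slope_ratio_inverse_square:
  fixes p q r C :: real
  assumes "-2 < p" "0 < q" "1 < r" "0 < C" "C \<le> q * r\<^sup>2"
  shows "crosses_down (slope_ratio p q (\<lambda>y. r\<^sup>2 + 1 - r\<^sup>2 / y\<^sup>2) (\<lambda>y. 2 * r\<^sup>2 / y ^ 3)) C 1 r"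
proof -
  define h where "h y = r\<^sup>2 + 1 - r\<^sup>2 / y\<^sup>2" for y :: real
  define h' where "h' y = 2 * r\<^sup>2 / y ^ 3" for y :: real
  define h'' where "h'' y = - 6 * r\<^sup>2 / y ^ 4" for y :: real
  have h_pos: "0 < h y" if "1 \<le> y" for y
    using that unfolding h_def by (rule inverse_square_profile_pos)
  have h'_pos: "0 < h' y" if "0 < y" for y using that \<open>1 < r\<close> by (simp add: h'_def)
  have log_deriv: "(log_slope_ratio p q h h' has_real_derivative
      (q / 2 - 1) * h' y / h y + h'' y / h' y + (1 - p) / y) (at y)" if "1 \<le> y" for y
  proof (rule has_real_derivative_log_slope_ratio)
    show "(h has_real_derivative h' y) (at y)" "(h' has_real_derivative h'' y) (at y)"
      unfolding h_def h'_def h''_def using that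
      by (auto intro!: derivative_eq_intros simp: field_simps eval_nat_numeral)
  qed (use that h_pos h'_pos in auto)
  have "crosses_down (log_slope_ratio p q h h') (ln C) 1 r"
  proof (rule crosses_down_if_deriv_factor_decreasing[OF _ log_deriv])
    show "continuous_on {1..r} (log_slope_ratio p q h h')"
      by (rule DERIV_atLeastAtMost_imp_continuous_on) (use log_deriv in blast)
    show "(q / 2 - 1) * h' y / h y + h'' y / h' y + (1 - p) / y
        = ((q - 2) * r\<^sup>2 - (p + 2) * (y\<^sup>2 * h y)) * (1 / (y ^ 3 * h y))" if "1 < y" for y
      using that h_pos[of y] \<open>1 < r\<close>
      by (simp add: h'_def h''_def field_simps eval_nat_numeral)
    show "0 < 1 / (y ^ 3 * h y)" if "1 < y" for y using that h_pos[of y] by simp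
    show "(q - 2) * r\<^sup>2 - (p + 2) * (z\<^sup>2 * h z) < (q - 2) * r\<^sup>2 - (p + 2) * (y\<^sup>2 * h y)"
      if "1 < y" "y < z" for y z
    proof -
      have "y\<^sup>2 < z\<^sup>2" using that by (simp add: power_strict_mono)
      then have "(r\<^sup>2 + 1) * y\<^sup>2 < (r\<^sup>2 + 1) * z\<^sup>2"
        by (intro mult_strict_left_mono) (auto intro: add_nonneg_pos)
      moreover have "y\<^sup>2 * h y = (r\<^sup>2 + 1) * y\<^sup>2 - r\<^sup>2" "z\<^sup>2 * h z = (r\<^sup>2 + 1) * z\<^sup>2 - r\<^sup>2"
        using that by (auto simp: h_def field_simps)
      ultimately show ?thesis using \<open>-2 < p\<close> by (simp add: mult_strict_left_mono)
    qed
    have "log_slope_ratio p q h h' 1 = ln (q * r\<^sup>2)"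
      using \<open>0 < q\<close> \<open>1 < r\<close> by (simp add: log_slope_ratio_def h_def h'_def ln_mult ln_div)
    then show "ln C \<le> log_slope_ratio p q h h' 1" using assms by simp
  qed auto
  then show ?thesis
    unfolding h_def h'_def
    by (rule crosses_down_slope_ratio_if_log) (use assms h_pos h'_pos in \<open>auto simp: h_def h'_def\<close>)
qed

lemma crosses_down_slope_ratio_linear:
  fixes p q r C :: real
  assumes "q = p + 3" "-3 < p" "p < 3" "1 < r" "q * r\<^sup>2 < C"
  shows "crosses_down (slope_ratio p q (\<lambda>y. r\<^sup>2 - 2 * r + 2 * y) (\<lambda>y. 2)) C 1 r"
proof -
  define h where "h y = r\<^sup>2 - 2 * r + 2 * y" for y :: real
  have "0 < q" using assms by simp
  have "0 < q * r\<^sup>2" using \<open>0 < q\<close> \<open>1 < r\<close> by simp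
  then have "0 < C" using assms by linarith
  have h_pos: "0 < h y" if "1 \<le> y" for y
    using that unfolding h_def by (rule linear_profile_pos)
  have log_deriv: "(log_slope_ratio p q h (\<lambda>y. 2) has_real_derivative
      (q - 2) / h y + (1 - p) / y) (at y)" if "1 \<le> y" for y
  proof -
    have "(log_slope_ratio p q h (\<lambda>y. 2) has_real_derivative
        (q / 2 - 1) * 2 / h y + 0 / 2 + (1 - p) / y) (at y)"
      using that h_pos[OF that] unfolding h_def
      by (intro has_real_derivative_log_slope_ratio) (auto intro!: derivative_eq_intros)
    then show ?thesis by (rule DERIV_cong) (simp add: algebra_simps)
  qed
  have "crosses_down (log_slope_ratio p q h (\<lambda>y. 2)) (ln C) 1 r"
  proof (rule crosses_down_if_deriv_factor_increasing[OF _ log_deriv])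
    show "continuous_on {1..r} (log_slope_ratio p q h (\<lambda>y. 2))"
      by (rule DERIV_atLeastAtMost_imp_continuous_on) (use log_deriv in blast)
    show "(q - 2) / h y + (1 - p) / y = ((q - 2) * y + (1 - p) * h y) * (1 / (y * h y))"
      if "1 < y" for y
      using that h_pos[of y] by (simp add: field_simps)
    show "0 < 1 / (y * h y)" if "1 < y" for y using that h_pos[of y] by simp
    show "(q - 2) * y + (1 - p) * h y < (q - 2) * z + (1 - p) * h z" if "y < z" for y z
    proof -
      have "0 < (3 - p) * (z - y)" using that assms by (intro mult_pos_pos) auto
      then show ?thesis using assms by (simp add: h_def algebra_simps)
    qed
    have "log_slope_ratio p q h (\<lambda>y. 2) r = ln (q / 2) + (q / 2 - 1) * (2 * ln r) + ln 2 + (1 - p) * ln r"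
      using \<open>1 < r\<close> by (simp add: log_slope_ratio_def h_def ln_realpow)
    also have "\<dots> = ln q + 2 * ln r"
      using assms \<open>0 < q\<close> by (simp add: ln_div algebra_simps)
    also have "\<dots> = ln (q * r\<^sup>2)"
      using \<open>0 < q\<close> \<open>1 < r\<close> by (simp add: ln_mult ln_realpow)
    finally show "log_slope_ratio p q h (\<lambda>y. 2) r < ln C"
      using \<open>0 < q * r\<^sup>2\<close> \<open>q * r\<^sup>2 < C\<close> by simp
  qed auto
  then show ?thesis
    unfolding h_def
    by (rule crosses_down_slope_ratio_if_log) (use \<open>0 < q\<close> \<open>0 < C\<close> h_pos in \<open>auto simp: h_def\<close>)
qed

lemma powr_box_cox_less_inverse_square:
  fixes p q r x :: real
  defines "C \<equiv> (r powr q - 1) / box_cox p r"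
  assumes "-2 < p" "0 < q" "1 < r" "C \<le> q * r\<^sup>2" "1 < x" "x < r"
  shows "(1 + C * box_cox p x) powr (2 / q) < r\<^sup>2 + 1 - r\<^sup>2 / x\<^sup>2"
  unfolding C_def
proof (rule powr_box_cox_less_if_slope_ratio_crosses_down[where h' = "\<lambda>y. 2 * r\<^sup>2 / y ^ 3"])
  show "crosses_down (slope_ratio p q (\<lambda>y. r\<^sup>2 + 1 - r\<^sup>2 / y\<^sup>2) (\<lambda>y. 2 * r\<^sup>2 / y ^ 3))
      ((r powr q - 1) / box_cox p r) 1 r"
    using assms box_cox_ratio_pos[of q r p] by (intro crosses_down_slope_ratio_inverse_square) auto
  show "((\<lambda>y. r\<^sup>2 + 1 - r\<^sup>2 / y\<^sup>2) has_real_derivative 2 * r\<^sup>2 / y ^ 3) (at y)" if "1 \<le> y" for y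
    using that by (auto intro!: derivative_eq_intros simp: field_simps eval_nat_numeral)
  show "0 < r\<^sup>2 + 1 - r\<^sup>2 / y\<^sup>2" if "1 \<le> y" for y
    using that by (rule inverse_square_profile_pos)
qed (use assms in auto)

lemma powr_box_cox_less_linear:
  fixes p q r x :: real
  defines "C \<equiv> (r powr q - 1) / box_cox p r"
  assumes "q = p + 3" "-3 < p" "p < 3" "1 < r" "q * r\<^sup>2 < C" "1 < x" "x < r"
  shows "(1 + C * box_cox p x) powr (2 / q) < r\<^sup>2 - 2 * r + 2 * x"
  unfolding C_def
proof (rule powr_box_cox_less_if_slope_ratio_crosses_down[where h' = "\<lambda>y. 2"])
  show "crosses_down (slope_ratio p q (\<lambda>y. r\<^sup>2 - 2 * r + 2 * y) (\<lambda>y. 2))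
      ((r powr q - 1) / box_cox p r) 1 r"
    using assms by (intro crosses_down_slope_ratio_linear) auto
  show "((\<lambda>y. r\<^sup>2 - 2 * r + 2 * y) has_real_derivative 2) (at y)" for y
    by (auto intro!: derivative_eq_intros)
  show "0 < r\<^sup>2 - 2 * r + 2 * y" if "1 \<le> y" for y
    using that by (rule linear_profile_pos)
  show "1 \<le> r\<^sup>2 - 2 * r + 2 * 1"
    using zero_le_power2[of "r - 1"] by (simp add: power2_eq_square algebra_simps)
qed (use assms in auto)

theorem lemma7p4:
  fixes p q r :: real
  assumes "q - p = 3" and "-1 < p" and "p < 2" and "q > 2 * p / (2 - p)" and "r > 1"
  shows "(K_ratio p q r \<le> r\<^sup>2 \<longrightarrow>
            (\<forall>x. 1 < x \<and> x < r \<longrightarrow> I_fun p q r x < r\<^sup>2 + 1 - r\<^sup>2 / x\<^sup>2 - x\<^sup>2))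
       \<and> (K_ratio p q r > r\<^sup>2 \<longrightarrow>
            (\<forall>x. 1 < x \<and> x < r \<longrightarrow> I_fun p q r x < r\<^sup>2 - 2 * r + 2 * x - x\<^sup>2))"
proof -
  define C where "C = (r powr q - 1) / box_cox p r"
  have "0 < q" using assms by simp
  have K_ratio_eq: "K_ratio p q r = C / q" by (simp add: K_ratio_eq_box_cox C_def)
  have I_fun_eq: "I_fun p q r x = (1 + C * box_cox p x) powr (2 / q) - x\<^sup>2" for x
    by (simp add: I_fun_eq_box_cox C_def)
  show ?thesis
  proof (intro conjI impI allI)
    fix x assume "K_ratio p q r \<le> r\<^sup>2" "1 < x \<and> x < r"
    then have "C \<le> q * r\<^sup>2" using \<open>0 < q\<close> by (simp add: K_ratio_eq pos_divide_le_eq mult.commute)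
    then have "(1 + C * box_cox p x) powr (2 / q) < r\<^sup>2 + 1 - r\<^sup>2 / x\<^sup>2"
      using assms \<open>0 < q\<close> \<open>1 < x \<and> x < r\<close> unfolding C_def
      by (intro powr_box_cox_less_inverse_square) auto
    then show "I_fun p q r x < r\<^sup>2 + 1 - r\<^sup>2 / x\<^sup>2 - x\<^sup>2" by (simp add: I_fun_eq)
  next
    fix x assume "r\<^sup>2 < K_ratio p q r" "1 < x \<and> x < r"
    then have "q * r\<^sup>2 < C" using \<open>0 < q\<close> by (simp add: K_ratio_eq pos_less_divide_eq mult.commute)
    then have "(1 + C * box_cox p x) powr (2 / q) < r\<^sup>2 - 2 * r + 2 * x"
      using assms \<open>1 < x \<and> x < r\<close> unfolding C_def
      by (intro powr_box_cox_less_linear) auto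
    then show "I_fun p q r x < r\<^sup>2 - 2 * r + 2 * x - x\<^sup>2" by (simp add: I_fun_eq)
  qed
qed

end
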